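(* Fix $p\in(0,1)$ and $\lambda\in\mathbb{R}$. For any fixed $T>0$ and $a\in(0,\frac{p}{1+p})$ there exist $b_{T,a}>0$ and $C_{T,a}>0$ such that for all $b\ge b_{T,a}$ and all $t\in[ap\log b,T+ap\log b]$: if $p\in(0,\frac12)$, then $$|\gamma_h(t)|\le C_{T,a}\left[(|\lambda|b^{-2p(1-a)}+b^{-4p(1-a)})e^{-t/p}+(|\lambda|b^{-2p}+b^{-4p})e^{t/p}\right];$$ if $p\in[\frac12,1)$, then $$|\gamma_h(t)|\le C_{T,a}\left[(|\lambda|b^{-2p(1-a)}+b^{-4p(1-a)})e^{-t/p}+(|\lambda|b^{-2p}+b^{-4p(1-a)})e^{t/p}\right].$$ The same bounds hold for $\gamma_h'(t)$.
   Context: Let $\Theta_h(t)=\dfrac{e^{t/p}}{(1+\alpha_pe^{2t})^{1/p}}$ with $\alpha_p=\frac{p^2}{4(1+p)}$. Let $\Sigma$ be a solution of the linear equation $\Sigma''-\frac{1}{p^2}\Sigma+(2p+1)\Theta_h^{2p}\Sigma=0$ normalized by the Wronskian relation $\Theta_h'(t)\Sigma'(t)-\Theta_h''(t)\Sigma(t)=1$ for all $t$ (the expression below does not depend on which such $\Sigma$ is chosen). Let $f_b(t)=-\lambda b^{-2p}e^{2t}+b^{-4p}e^{4t}$ and define $$\gamma_h(t)=\Sigma(t)\int_{-\infty}^t f_b(t')\Theta_h'(t')\Theta_h(t')\,dt'-\Theta_h'(t)\int_{-\infty}^t f_b(t')\Sigma(t')\Theta_h(t')\,dt'.$$ *)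

theory Defs
  imports "HOL-Analysis.Analysis"
begin

definition alpha_p :: "real \<Rightarrow> real" where
  "alpha_p p = p^2 / (4 * (1 + p))"

definition Theta_h :: "real \<Rightarrow> real \<Rightarrow> real" where
  "Theta_h p t = exp (t / p) / (1 + alpha_p p * exp (2 * t)) powr (1 / p)"

definition f_b :: "real \<Rightarrow> real \<Rightarrow> real \<Rightarrow> real \<Rightarrow> real" where
  "f_b p lam b t = - lam * b powr (-2 * p) * exp (2 * t) + b powr (-4 * p) * exp (4 * t)"

text \<open>gamma_h; integrals over (-infinity, t] are Henstock-Kurzweil integrals over the ray.\<close>
definition gamma_h :: "real \<Rightarrow> real \<Rightarrow> real \<Rightarrow> (real \<Rightarrow> real) \<Rightarrow> real \<Rightarrow> real" where
  "gamma_h p lam b Sg t =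
     Sg t * integral {..t} (\<lambda>s. f_b p lam b s * deriv (Theta_h p) s * Theta_h p s)
     - deriv (Theta_h p) t * integral {..t} (\<lambda>s. f_b p lam b s * Sg s * Theta_h p s)"

end

theory Submission
  imports Defs
begin

(* Theta_h behaves like e^(t/p) as t -> -oo and like e^(-t/p) as t -> +oo, and so do its
   derivatives Theta' = Theta1 and Theta'' = Theta2 (up to constants). The Wronskian identity
   Theta' Sg' - Theta'' Sg = 1 says exactly that (Sg / Theta')' = 1 / Theta'^2; integrating this on
   either side gives |Sg|, |Sg'| = O(e^(t/p)) for large t and Sg Theta_h = O(1) everywhere.
   Write gamma_h = Sg I1 - Theta' I2 with I1 = int f_b Theta' Theta_h and I2 = int f_b Sg Theta_h
   over (-oo, t]. On differentiating, the two terms f_b Sg Theta' Theta_h cancel, so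
   gamma_h' = Sg' I1 - Theta'' I2, and for large t both are O(e^(t/p) |I1| + e^(-t/p) |I2|).
   Since |f_b(s)| <= |lam| b^(-2p) e^(2s) + b^(-4p) e^(4s) and Sg Theta_h is bounded, |I2(t)| is
   O(|lam| b^(-2p(1-a)) + b^(-4p(1-a))) as long as t <= T + a p log b. The integral I1 is a
   combination of the moments int e^(ks) Theta' Theta_h for k = 2 and 4, which are bounded when
   k < 2/p and O(e^(kt)) otherwise; this is where p < 1 and the threshold p = 1/2 enter. Finally
   b >= b_0 pushes the whole window [a p log b, T + a p log b] into the region of large t. *)

lemma has_integral_exp_atMost:
  fixes c t :: real
  assumes "c > 0"
  shows "((\<lambda>x. exp (c * x)) has_integral exp (c * t) / c) {..t}"
proof -
  have "((\<lambda>x. exp (- c * x)) has_integral exp (- c * (- t)) / c) {- t..}"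
    using has_integral_exp_minus_to_infinity[OF assms] .
  then have "(\<lambda>x. exp (c * (- x))) absolutely_integrable_on {- t..}
      \<and> integral {- t..} (\<lambda>x. exp (c * (- x))) = exp (c * t) / c"
    by (auto intro!: nonnegative_absolutely_integrable_1 simp: has_integral_iff)
  then have "(\<lambda>x. exp (c * x)) absolutely_integrable_on {..t}
      \<and> integral {..t} (\<lambda>x. exp (c * x)) = exp (c * t) / c"
    by (subst (asm) has_absolute_integral_reflect_real[where B = "{..t}"]) auto
  then show ?thesis
    using absolutely_integrable_on_def has_integral_iff by blast
qed

lemma integral_atMost_bound_by_majorant:
  fixes F G :: "real \<Rightarrow> real"
  assumes F: "continuous_on UNIV F" and G: "(G has_integral I) {..t}"
    and le: "\<And>s. s \<le> t \<Longrightarrow> \<bar>F s\<bar> \<le> G s"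
  shows "F integrable_on {..t} \<and> \<bar>integral {..t} F\<bar> \<le> I"
proof -
  have meas: "F \<in> borel_measurable (lebesgue_on {..t})"
    using F by (intro continuous_imp_measurable_on_sets_lebesgue) (auto intro: continuous_on_subset)
  have "F integrable_on {..t}"
    using measurable_bounded_by_integrable_imp_integrable_real[OF meas] G le
    by (auto simp: has_integral_integrable)
  moreover have "norm (integral {..t} F) \<le> I"
    using integral_norm_bound_integral'[OF _ meas _ G] le by auto
  ultimately show ?thesis by simp
qed

lemma integral_atMost_bound_by_exp:
  fixes F :: "real \<Rightarrow> real"
  assumes F: "continuous_on UNIV F" and c: "c > 0"
    and le: "\<And>s. s \<le> t \<Longrightarrow> \<bar>F s\<bar> \<le> K * exp (c * s)"
  shows "F integrable_on {..t} \<and> \<bar>integral {..t} F\<bar> \<le> K * exp (c * t) / c"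
proof -
  have "((\<lambda>s. K * exp (c * s)) has_integral K * (exp (c * t) / c)) {..t}"
    using has_integral_mult_right[OF has_integral_exp_atMost[OF c]] .
  then show ?thesis
    using integral_atMost_bound_by_majorant[OF F] le by simp
qed

lemma exp_mult_bounded_integral_atMost:
  fixes g :: "real \<Rightarrow> real"
  assumes g: "continuous_on UNIV g" and M: "\<And>s. \<bar>g s\<bar> \<le> M" and k: "k > 0"
  shows "(\<lambda>s. exp (k * s) * g s) integrable_on {..t}
    \<and> \<bar>integral {..t} (\<lambda>s. exp (k * s) * g s)\<bar> \<le> M * exp (k * t) / k"
proof (rule integral_atMost_bound_by_exp[OF _ k])
  show "continuous_on UNIV (\<lambda>s. exp (k * s) * g s)"
    using g by (intro continuous_intros)
  fix s
  show "\<bar>exp (k * s) * g s\<bar> \<le> M * exp (k * s)"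
    using mult_right_mono[OF M[of s] less_imp_le[OF exp_gt_zero[of "k * s"]]]
    by (simp add: abs_mult mult.commute)
qed

lemma integral_atMost_split:
  fixes F :: "real \<Rightarrow> real"
  assumes F: "continuous_on UNIV F" and int: "F integrable_on {..a}" and "a \<le> t"
  shows "F integrable_on {..t} \<and> integral {..t} F = integral {..a} F + integral {a..t} F"
proof -
  have int': "F integrable_on {a..t}"
    using F by (intro integrable_continuous_interval) (auto intro: continuous_on_subset)
  have ray: "{..t} = {..a} \<union> {a..t}" using \<open>a \<le> t\<close> by auto
  have "negligible ({..a} \<inter> {a..t})"
    using \<open>a \<le> t\<close> by (subgoal_tac "{..a} \<inter> {a..t} = {a}") auto
  then show ?thesis
    unfolding ray using integral_Un[OF int int'] integrable_Un[OF _ int int'] by simp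
qed

lemma integral_atMost_bound_by_two_sided_exp:
  fixes F :: "real \<Rightarrow> real"
  assumes F: "continuous_on UNIV F" and c: "c > 0" and d: "d > 0"
    and left: "\<And>s. s \<le> 0 \<Longrightarrow> \<bar>F s\<bar> \<le> K * exp (c * s)"
    and right: "\<And>s. s \<ge> 0 \<Longrightarrow> \<bar>F s\<bar> \<le> K * exp (- d * s)"
  shows "\<bar>integral {..t} F\<bar> \<le> K / c + K / d"
proof -
  have K: "K \<ge> 0" using left[of 0] by simp
  show ?thesis
  proof (cases "t \<le> 0")
    case True
    then have "\<bar>integral {..t} F\<bar> \<le> K * exp (c * t) / c"
      using integral_atMost_bound_by_exp[OF F c] left by auto
    also have "\<dots> \<le> K / c"
      using True c K by (intro divide_right_mono mult_left_le) (auto simp: mult_nonneg_nonpos)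
    finally show ?thesis using divide_nonneg_pos[OF K d] by linarith
  next
    case False
    have left_ray: "F integrable_on {..0} \<and> \<bar>integral {..0} F\<bar> \<le> K / c"
      using integral_atMost_bound_by_exp[OF F c, of 0] left by auto
    have tail: "((\<lambda>s. K * exp (- d * s)) has_integral K / d) {0..}"
      using has_integral_mult_right[OF has_integral_exp_minus_to_infinity[OF d, of 0]] by simp
    have "norm (integral {0..t} F) \<le> integral {0..t} (\<lambda>s. K * exp (- d * s))"
      using F right
      by (intro integral_norm_bound_integral integrable_continuous_interval continuous_intros)
         (auto intro: continuous_on_subset)
    then have "\<bar>integral {0..t} F\<bar> \<le> integral {0..t} (\<lambda>s. K * exp (- d * s))"
      by simp
    also have "\<dots> \<le> integral {0..} (\<lambda>s. K * exp (- d * s))"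
      using tail K
      by (intro integral_subset_le integrable_continuous_interval continuous_intros)
         (auto simp: has_integral_integrable)
    also have "\<dots> = K / d" using tail by (rule integral_unique)
    finally show ?thesis
      using integral_atMost_split[OF F _, of 0 t] left_ray False by auto
  qed
qed

lemma integral_atMost_has_real_derivative:
  fixes F :: "real \<Rightarrow> real"
  assumes F: "continuous_on UNIV F" and int: "\<And>t. F integrable_on {..t}"
  shows "((\<lambda>t. integral {..t} F) has_real_derivative F x) (at x)"
proof -
  have "((\<lambda>y. integral {x - 1..y} F) has_real_derivative F x) (at x within {x - 1..x + 1})"
    using F by (intro integral_has_real_derivative) (auto intro: continuous_on_subset)
  moreover have "x \<in> interior {x - 1..x + 1}" by simp
  ultimately have "((\<lambda>y. integral {x - 1..y} F) has_real_derivative F x) (at x)"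
    by (metis at_within_interior)
  then have "((\<lambda>y. integral {..x - 1} F + integral {x - 1..y} F) has_real_derivative F x) (at x)"
    using DERIV_add[OF DERIV_const] by force
  then show ?thesis
  proof (rule has_field_derivative_transform_within_open[of _ _ _ "{x - 1<..}"])
    fix y :: real assume "y \<in> {x - 1<..}"
    then show "integral {..x - 1} F + integral {x - 1..y} F = integral {..y} F"
      using integral_atMost_split[OF F int, of "x - 1" y] by simp
  qed auto
qed

lemma increment_le_of_deriv_le:
  fixes f g :: "real \<Rightarrow> real"
  assumes "a \<le> b"
    and f: "\<And>x. a \<le> x \<Longrightarrow> x \<le> b \<Longrightarrow> (f has_real_derivative f' x) (at x)"
    and g: "\<And>x. a \<le> x \<Longrightarrow> x \<le> b \<Longrightarrow> (g has_real_derivative g' x) (at x)"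
    and le: "\<And>x. a \<le> x \<Longrightarrow> x \<le> b \<Longrightarrow> f' x \<le> g' x"
  shows "f b - f a \<le> g b - g a"
proof -
  have "(\<lambda>x. f x - g x) b \<le> (\<lambda>x. f x - g x) a"
  proof (rule DERIV_nonpos_imp_nonincreasing[OF \<open>a \<le> b\<close>])
    fix x assume "a \<le> x" "x \<le> b"
    then show "\<exists>y. ((\<lambda>x. f x - g x) has_real_derivative y) (at x) \<and> y \<le> 0"
      using DERIV_diff[OF f g] le by fastforce
  qed
  then show ?thesis by simp
qed

lemma inverse_square_le_of_le_abs:
  fixes c x :: real
  assumes "0 < c" and "c \<le> \<bar>x\<bar>"
  shows "1 / x^2 \<le> 1 / c^2"
  using assms by (intro divide_left_mono) (auto simp: abs_le_square_iff[symmetric])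

lemma powr_mult_exp_le_window:
  fixes b t T a p k :: real
  assumes b: "b > 0" and t: "t \<le> T + a * p * ln b" and k: "k \<ge> 0"
  shows "b powr (- k * p) * exp (k * t) \<le> exp (k * T) * b powr (- k * p * (1 - a))"
proof -
  have "exp (k * t) \<le> exp (k * T + k * a * p * ln b)"
    using mult_left_mono[OF t k] by (simp add: algebra_simps)
  also have "\<dots> = exp (k * T) * b powr (k * a * p)"
    using b by (simp add: exp_add powr_def mult_ac)
  finally have "b powr (- k * p) * exp (k * t) \<le> b powr (- k * p) * (exp (k * T) * b powr (k * a * p))"
    by (rule mult_left_mono) simp
  also have "\<dots> = exp (k * T) * (b powr (- k * p) * b powr (k * a * p))"
    by (simp only: mult_ac)
  also have "b powr (- k * p) * b powr (k * a * p) = b powr (- k * p * (1 - a))"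
    by (simp add: powr_add[symmetric] algebra_simps)
  finally show ?thesis .
qed

lemma abs_mult_diff_mult_le:
  fixes x y u w A B :: real
  assumes "\<bar>x\<bar> \<le> A" and "\<bar>y\<bar> \<le> B"
  shows "\<bar>x * u - y * w\<bar> \<le> A * \<bar>u\<bar> + B * \<bar>w\<bar>"
proof -
  have "\<bar>x * u - y * w\<bar> \<le> \<bar>x\<bar> * \<bar>u\<bar> + \<bar>y\<bar> * \<bar>w\<bar>"
    by (simp add: abs_mult abs_triangle_ineq4[THEN order_trans])
  also have "\<dots> \<le> A * \<bar>u\<bar> + B * \<bar>w\<bar>"
    using assms by (intro add_mono mult_right_mono) auto
  finally show ?thesis .
qed

section \<open>The profile Theta_h\<close>

lemma alpha_p_pos: "p > 0 \<Longrightarrow> alpha_p p > 0"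
  by (simp add: alpha_p_def)

lemma Theta_h_eq_exp:
  assumes "p > 0"
  shows "Theta_h p t = exp ((t - ln (1 + alpha_p p * exp (2 * t))) / p)"
proof -
  have "1 + alpha_p p * exp (2 * t) > 0"
    using alpha_p_pos[OF assms] by (simp add: add_pos_pos)
  then show ?thesis
    unfolding Theta_h_def by (simp add: powr_def exp_diff[symmetric] diff_divide_distrib)
qed

lemma Theta_h_pos: "p > 0 \<Longrightarrow> Theta_h p t > 0"
  by (simp add: Theta_h_eq_exp)

definition Theta_logderiv :: "real \<Rightarrow> real \<Rightarrow> real" where
  "Theta_logderiv p t = (1 - alpha_p p * exp (2 * t)) / (p * (1 + alpha_p p * exp (2 * t)))"

definition Theta_logderiv2 :: "real \<Rightarrow> real \<Rightarrow> real" where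
  "Theta_logderiv2 p t = - 4 * alpha_p p * exp (2 * t) / (p * (1 + alpha_p p * exp (2 * t))^2)"

definition Theta1 :: "real \<Rightarrow> real \<Rightarrow> real" where
  "Theta1 p t = Theta_h p t * Theta_logderiv p t"

definition Theta2 :: "real \<Rightarrow> real \<Rightarrow> real" where
  "Theta2 p t = Theta_h p t * ((Theta_logderiv p t)^2 + Theta_logderiv2 p t)"

lemma Theta_h_has_real_derivative:
  assumes p: "p > 0"
  shows "(Theta_h p has_real_derivative Theta1 p t) (at t)"
proof -
  let ?E = "alpha_p p * exp (2 * t)"
  have E: "1 + ?E > 0" using alpha_p_pos[OF p] by (simp add: add_pos_pos)
  have "((\<lambda>t. exp ((t - ln (1 + alpha_p p * exp (2 * t))) / p)) has_real_derivative
      exp ((t - ln (1 + ?E)) / p) * ((1 - alpha_p p * (exp (2 * t) * 2) / (1 + ?E)) / p)) (at t)"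
    using E p by (auto intro!: derivative_eq_intros)
  moreover have "(1 - alpha_p p * (exp (2 * t) * 2) / (1 + ?E)) / p = (1 - ?E) / (p * (1 + ?E))"
    using E p by (simp add: field_simps)
  ultimately show ?thesis
    by (simp add: Theta_h_eq_exp[OF p, abs_def] Theta1_def Theta_logderiv_def Theta_h_eq_exp[OF p])
qed

lemma Theta_logderiv_has_real_derivative:
  assumes p: "p > 0"
  shows "(Theta_logderiv p has_real_derivative Theta_logderiv2 p t) (at t)"
proof -
  let ?a = "alpha_p p"
  have E: "1 + ?a * exp (2 * t) > 0" using alpha_p_pos[OF p] by (simp add: add_pos_pos)
  have "((\<lambda>t. (1 - ?a * exp (2 * t)) / (p * (1 + ?a * exp (2 * t)))) has_real_derivative
      (- (?a * (exp (2 * t) * 2)) * (p * (1 + ?a * exp (2 * t)))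
        - (1 - ?a * exp (2 * t)) * (p * (?a * (exp (2 * t) * 2))))
      / (p * (1 + ?a * exp (2 * t)))^2) (at t)"
    using E p by (auto intro!: derivative_eq_intros simp: power2_eq_square)
  moreover have "(- (?a * (exp (2 * t) * 2)) * (p * (1 + ?a * exp (2 * t)))
        - (1 - ?a * exp (2 * t)) * (p * (?a * (exp (2 * t) * 2))))
      / (p * (1 + ?a * exp (2 * t)))^2 = Theta_logderiv2 p t"
  proof -
    have "- (?a * (exp (2 * t) * 2)) * (p * (1 + ?a * exp (2 * t)))
        - (1 - ?a * exp (2 * t)) * (p * (?a * (exp (2 * t) * 2))) = p * (- 4 * ?a * exp (2 * t))"
      by (simp add: algebra_simps)
    then show ?thesis
      using E p by (simp add: Theta_logderiv2_def power_mult_distrib power2_eq_square mult_ac)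
  qed
  ultimately show ?thesis
    by (simp add: Theta_logderiv_def[abs_def])
qed

lemma Theta1_has_real_derivative:
  assumes p: "p > 0"
  shows "(Theta1 p has_real_derivative Theta2 p t) (at t)"
proof -
  have "((\<lambda>t. Theta_h p t * Theta_logderiv p t) has_real_derivative
      Theta1 p t * Theta_logderiv p t + Theta_logderiv2 p t * Theta_h p t) (at t)"
    by (rule DERIV_mult[OF Theta_h_has_real_derivative[OF p] Theta_logderiv_has_real_derivative[OF p]])
  then show ?thesis
    by (simp add: Theta1_def[abs_def] Theta2_def algebra_simps power2_eq_square)
qed

lemma deriv_Theta_h: "p > 0 \<Longrightarrow> deriv (Theta_h p) = Theta1 p"
  using Theta_h_has_real_derivative DERIV_imp_deriv by blast

lemma deriv_Theta1: "p > 0 \<Longrightarrow> deriv (Theta1 p) = Theta2 p"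
  using Theta1_has_real_derivative DERIV_imp_deriv by blast

lemma continuous_on_Theta_h: "p > 0 \<Longrightarrow> continuous_on UNIV (Theta_h p)"
  using Theta_h_has_real_derivative by (meson DERIV_isCont continuous_at_imp_continuous_on)

lemma continuous_on_Theta1: "p > 0 \<Longrightarrow> continuous_on UNIV (Theta1 p)"
  using Theta1_has_real_derivative by (meson DERIV_isCont continuous_at_imp_continuous_on)

lemma Theta_h_le_exp:
  assumes p: "p > 0"
  shows "Theta_h p t \<le> exp (t / p)"
proof -
  have "0 \<le> ln (1 + alpha_p p * exp (2 * t))" using alpha_p_pos[OF p] by simp
  then show ?thesis
    using p by (simp add: Theta_h_eq_exp[OF p] divide_right_mono)
qed

lemma Theta_h_le_exp_neg:
  assumes p: "p > 0"
  shows "Theta_h p t \<le> alpha_p p powr (- 1 / p) * exp (- t / p)"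
proof -
  let ?a = "alpha_p p"
  have a: "?a > 0" using alpha_p_pos[OF p] .
  have "ln ?a + 2 * t = ln (?a * exp (2 * t))" using a by (simp add: ln_mult)
  also have "\<dots> \<le> ln (1 + ?a * exp (2 * t))" using a by (simp add: add_pos_pos)
  finally have "(t - ln (1 + ?a * exp (2 * t))) / p \<le> (- ln ?a - t) / p"
    using p by (intro divide_right_mono) auto
  then have "Theta_h p t \<le> exp ((- ln ?a - t) / p)"
    by (simp add: Theta_h_eq_exp[OF p])
  also have "\<dots> = ?a powr (- 1 / p) * exp (- t / p)"
    using a by (simp add: powr_def exp_add[symmetric] diff_divide_distrib)
  finally show ?thesis .
qed

lemma Theta_h_ge_right:
  assumes p: "p > 0" and t: "2 \<le> alpha_p p * exp (2 * t)"
  shows "(3 * alpha_p p / 2) powr (- 1 / p) * exp (- t / p) \<le> Theta_h p t"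
proof -
  let ?a = "alpha_p p"
  have a: "?a > 0" using alpha_p_pos[OF p] .
  have "ln (1 + ?a * exp (2 * t)) \<le> ln ((3 * ?a / 2) * exp (2 * t))"
    using t a by (simp add: add_pos_pos)
  also have "\<dots> = ln (3 * ?a / 2) + ln (exp (2 * t))"
    using a by (intro ln_mult_pos) auto
  finally have "(- ln (3 * ?a / 2) - t) / p \<le> (t - ln (1 + ?a * exp (2 * t))) / p"
    using p by (intro divide_right_mono) auto
  then have "exp ((- ln (3 * ?a / 2) - t) / p) \<le> Theta_h p t"
    by (simp add: Theta_h_eq_exp[OF p])
  moreover have "exp ((- ln (3 * ?a / 2) - t) / p) = (3 * ?a / 2) powr (- 1 / p) * exp (- t / p)"
    using a by (simp add: powr_def exp_add[symmetric] diff_divide_distrib)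
  ultimately show ?thesis by simp
qed

lemma Theta_h_ge_left:
  assumes p: "p > 0" and t: "alpha_p p * exp (2 * t) \<le> 1 / 2"
  shows "(3 / 2) powr (- 1 / p) * exp (t / p) \<le> Theta_h p t"
proof -
  have "ln (1 + alpha_p p * exp (2 * t)) \<le> ln (3 / 2)"
    using t alpha_p_pos[OF p] by (simp add: add_pos_pos)
  then have "(- ln (3 / 2) + t) / p \<le> (t - ln (1 + alpha_p p * exp (2 * t))) / p"
    using p by (intro divide_right_mono) auto
  then have "exp ((- ln (3 / 2) + t) / p) \<le> Theta_h p t"
    by (simp add: Theta_h_eq_exp[OF p])
  moreover have "exp ((- ln (3 / 2) + t) / p) = (3 / 2) powr (- 1 / p) * exp (t / p)"
    by (simp add: powr_def exp_add[symmetric] add_divide_distrib diff_divide_distrib)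
  ultimately show ?thesis by simp
qed

lemma abs_Theta_logderiv_le:
  assumes p: "p > 0"
  shows "\<bar>Theta_logderiv p t\<bar> \<le> 1 / p"
proof -
  let ?E = "alpha_p p * exp (2 * t)"
  have E: "?E > 0" using alpha_p_pos[OF p] by simp
  have "\<bar>1 - ?E\<bar> / (p * (1 + ?E)) \<le> (1 + ?E) / (p * (1 + ?E))"
    using E p by (intro divide_right_mono) auto
  then show ?thesis
    using E p by (simp add: Theta_logderiv_def abs_mult)
qed

lemma abs_Theta_logderiv2_le:
  assumes p: "p > 0"
  shows "\<bar>Theta_logderiv2 p t\<bar> \<le> 4 / p"
proof -
  let ?E = "alpha_p p * exp (2 * t)"
  have E: "?E > 0" using alpha_p_pos[OF p] by simp
  have "(1 + ?E)^2 = 1 + ?E^2 + 2 * ?E"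
    by (simp add: power2_sum)
  then have "?E \<le> (1 + ?E)^2"
    using E zero_le_power2[of ?E] by linarith
  then have "4 * ?E / (p * (1 + ?E)^2) \<le> 4 * (1 + ?E)^2 / (p * (1 + ?E)^2)"
    using E p by (intro divide_right_mono) auto
  then show ?thesis
    using E p alpha_p_pos[OF p] by (simp add: Theta_logderiv2_def abs_mult mult.assoc)
qed

lemma Theta_logderiv_le_right:
  assumes p: "p > 0" and t: "2 \<le> alpha_p p * exp (2 * t)"
  shows "Theta_logderiv p t \<le> - 1 / (3 * p)"
proof -
  let ?E = "alpha_p p * exp (2 * t)"
  have "1 - ?E \<le> (- 1 / (3 * p)) * (p * (1 + ?E))"
    using t p by (simp add: field_simps)
  then show ?thesis
    unfolding Theta_logderiv_def using p t by (subst pos_divide_le_eq) auto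
qed

lemma Theta_logderiv_ge_left:
  assumes p: "p > 0" and t: "alpha_p p * exp (2 * t) \<le> 1 / 2"
  shows "1 / (3 * p) \<le> Theta_logderiv p t"
proof -
  let ?E = "alpha_p p * exp (2 * t)"
  have E: "?E > 0" using alpha_p_pos[OF p] by simp
  have "(1 / (3 * p)) * (p * (1 + ?E)) \<le> 1 - ?E"
    using t p by (simp add: field_simps)
  then show ?thesis
    unfolding Theta_logderiv_def using p E by (subst pos_le_divide_eq) (auto simp: add_pos_pos)
qed

lemma abs_Theta1_le:
  assumes p: "p > 0"
  shows "\<bar>Theta1 p t\<bar> \<le> Theta_h p t / p"
  using mult_left_mono[OF abs_Theta_logderiv_le[OF p] less_imp_le[OF Theta_h_pos[OF p]]]
  by (simp add: Theta1_def abs_mult Theta_h_pos[OF p, THEN less_imp_le])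

lemma abs_Theta2_le:
  assumes p: "p > 0"
  shows "\<bar>Theta2 p t\<bar> \<le> (1 / p^2 + 4 / p) * Theta_h p t"
proof -
  have "(Theta_logderiv p t)^2 \<le> (1 / p)^2"
    using abs_Theta_logderiv_le[OF p] by (simp add: abs_le_square_iff[symmetric] abs_of_pos p)
  moreover have "\<bar>(Theta_logderiv p t)^2 + Theta_logderiv2 p t\<bar>
      \<le> (Theta_logderiv p t)^2 + \<bar>Theta_logderiv2 p t\<bar>"
    by (simp add: abs_triangle_ineq[THEN order_trans])
  ultimately have "\<bar>(Theta_logderiv p t)^2 + Theta_logderiv2 p t\<bar> \<le> 1 / p^2 + 4 / p"
    using abs_Theta_logderiv2_le[OF p, of t] by (simp add: power_divide)
  then show ?thesis
    using Theta_h_pos[OF p, of t] by (simp add: Theta2_def abs_mult mult_left_mono mult.commute)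
qed

lemma abs_Theta1_ge_right:
  assumes p: "p > 0" and t: "2 \<le> alpha_p p * exp (2 * t)"
  shows "Theta_h p t / (3 * p) \<le> \<bar>Theta1 p t\<bar>"
proof -
  have "1 / (3 * p) \<le> \<bar>Theta_logderiv p t\<bar>"
    using Theta_logderiv_le_right[OF p t] p by simp
  from mult_left_mono[OF this less_imp_le[OF Theta_h_pos[OF p]]] show ?thesis
    by (simp add: Theta1_def abs_mult Theta_h_pos[OF p, THEN less_imp_le])
qed

lemma Theta1_ge_left:
  assumes p: "p > 0" and t: "alpha_p p * exp (2 * t) \<le> 1 / 2"
  shows "Theta_h p t / (3 * p) \<le> Theta1 p t"
  using mult_left_mono[OF Theta_logderiv_ge_left[OF p t] less_imp_le[OF Theta_h_pos[OF p]]]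
  by (simp add: Theta1_def)

definition Theta_right_edge :: "real \<Rightarrow> real" where
  "Theta_right_edge p = ln (2 / alpha_p p) / 2"

definition Theta_left_edge :: "real \<Rightarrow> real" where
  "Theta_left_edge p = ln (1 / (2 * alpha_p p)) / 2"

lemma Theta_right_edge_le_iff:
  assumes p: "p > 0"
  shows "Theta_right_edge p \<le> t \<longleftrightarrow> 2 \<le> alpha_p p * exp (2 * t)"
proof -
  have a: "alpha_p p > 0" using alpha_p_pos[OF p] .
  have "Theta_right_edge p \<le> t \<longleftrightarrow> ln (2 / alpha_p p) \<le> 2 * t"
    by (auto simp: Theta_right_edge_def)
  also have "\<dots> \<longleftrightarrow> 2 / alpha_p p \<le> exp (2 * t)"
    using a by (metis divide_pos_pos exp_le_cancel_iff exp_ln zero_less_numeral)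
  also have "\<dots> \<longleftrightarrow> 2 \<le> alpha_p p * exp (2 * t)"
    using a by (simp add: divide_le_eq mult.commute)
  finally show ?thesis .
qed

lemma le_Theta_left_edge_iff:
  assumes p: "p > 0"
  shows "t \<le> Theta_left_edge p \<longleftrightarrow> alpha_p p * exp (2 * t) \<le> 1 / 2"
proof -
  have a: "alpha_p p > 0" using alpha_p_pos[OF p] .
  have "t \<le> Theta_left_edge p \<longleftrightarrow> 2 * t \<le> ln (1 / (2 * alpha_p p))"
    by (auto simp: Theta_left_edge_def)
  also have "\<dots> \<longleftrightarrow> exp (2 * t) \<le> 1 / (2 * alpha_p p)"
    using a by (metis divide_pos_pos exp_le_cancel_iff exp_ln mult_pos_pos zero_less_numeral zero_less_one)
  also have "\<dots> \<longleftrightarrow> alpha_p p * exp (2 * t) \<le> 1 / 2"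
    using a by (simp add: le_divide_eq mult_ac)
  finally show ?thesis .
qed

lemma Theta1_lower_bound_right:
  assumes p: "p > 0"
  obtains c where "c > 0"
    and "\<And>t. Theta_right_edge p \<le> t \<Longrightarrow> c * exp (- t / p) \<le> \<bar>Theta1 p t\<bar>"
proof
  let ?c = "(3 * alpha_p p / 2) powr (- 1 / p) / (3 * p)"
  show "?c > 0" using p alpha_p_pos[OF p] by simp
  fix t assume "Theta_right_edge p \<le> t"
  then have t: "2 \<le> alpha_p p * exp (2 * t)" using Theta_right_edge_le_iff[OF p] by simp
  have "?c * exp (- t / p) \<le> Theta_h p t / (3 * p)"
    using Theta_h_ge_right[OF p t] p by (simp add: divide_right_mono)
  also have "\<dots> \<le> \<bar>Theta1 p t\<bar>" by (rule abs_Theta1_ge_right[OF p t])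
  finally show "?c * exp (- t / p) \<le> \<bar>Theta1 p t\<bar>" .
qed

lemma Theta1_lower_bound_left:
  assumes p: "p > 0"
  obtains c where "c > 0"
    and "\<And>t. t \<le> Theta_left_edge p \<Longrightarrow> c * exp (t / p) \<le> \<bar>Theta1 p t\<bar>"
proof
  let ?c = "(3 / 2) powr (- 1 / p) / (3 * p)"
  show "?c > 0" using p by simp
  fix t assume "t \<le> Theta_left_edge p"
  then have t: "alpha_p p * exp (2 * t) \<le> 1 / 2" using le_Theta_left_edge_iff[OF p] by simp
  have "?c * exp (t / p) \<le> Theta_h p t / (3 * p)"
    using Theta_h_ge_left[OF p t] p by (simp add: divide_right_mono)
  also have "\<dots> \<le> \<bar>Theta1 p t\<bar>" using Theta1_ge_left[OF p t] by simp
  finally show "?c * exp (t / p) \<le> \<bar>Theta1 p t\<bar>" .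
qed

lemma Theta_derivs_decay:
  assumes p: "p > 0"
  obtains K where "K \<ge> 0"
    and "\<And>t. \<bar>Theta1 p t\<bar> \<le> K * exp (- t / p) \<and> \<bar>Theta2 p t\<bar> \<le> K * exp (- t / p)"
proof
  let ?A = "alpha_p p powr (- 1 / p)"
  show "(1 / p + 1 / p^2 + 4 / p) * ?A \<ge> 0" using p by simp
  fix t
  have "\<bar>Theta1 p t\<bar> \<le> (1 / p) * (?A * exp (- t / p))"
    using abs_Theta1_le[OF p, of t] Theta_h_le_exp_neg[OF p, of t] p
    by (simp add: divide_right_mono order_trans)
  moreover have "\<bar>Theta2 p t\<bar> \<le> (1 / p^2 + 4 / p) * (?A * exp (- t / p))"
    using abs_Theta2_le[OF p, of t] Theta_h_le_exp_neg[OF p, of t] p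
    by (smt (verit) mult_left_mono zero_le_divide_1_iff zero_le_power divide_nonneg_pos)
  moreover have "0 \<le> ?A * exp (- t / p)" by simp
  ultimately show "\<bar>Theta1 p t\<bar> \<le> (1 / p + 1 / p^2 + 4 / p) * ?A * exp (- t / p)
      \<and> \<bar>Theta2 p t\<bar> \<le> (1 / p + 1 / p^2 + 4 / p) * ?A * exp (- t / p)"
    using p by (auto simp: algebra_simps intro: order_trans)
qed

lemma abs_Theta1_mult_Theta_le:
  assumes p: "p > 0"
  shows "\<bar>Theta1 p t * Theta_h p t\<bar> \<le> (Theta_h p t)^2 / p"
  using mult_right_mono[OF abs_Theta1_le[OF p] less_imp_le[OF Theta_h_pos[OF p]]]
  by (simp add: abs_mult power2_eq_square Theta_h_pos[OF p, THEN less_imp_le])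

lemma Theta_h_sq_le_exp:
  assumes p: "p > 0"
  shows "(Theta_h p t)^2 \<le> exp (2 * t / p)"
proof -
  have "(Theta_h p t)^2 \<le> (exp (t / p))^2"
    using Theta_h_le_exp[OF p] Theta_h_pos[OF p, of t] by (intro power_mono) auto
  then show ?thesis by (simp add: exp_double[symmetric])
qed

lemma Theta_h_sq_bounded:
  assumes p: "p > 0"
  shows "(Theta_h p t)^2 \<le> alpha_p p powr (- 1 / p)"
proof -
  have "(Theta_h p t)^2 \<le> exp (t / p) * (alpha_p p powr (- 1 / p) * exp (- t / p))"
    unfolding power2_eq_square
    using Theta_h_le_exp[OF p] Theta_h_le_exp_neg[OF p] Theta_h_pos[OF p, of t]
    by (intro mult_mono) auto
  then show ?thesis by (simp add: exp_minus field_simps)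
qed

lemma continuous_on_Theta1_mult_Theta:
  "p > 0 \<Longrightarrow> continuous_on UNIV (\<lambda>s. Theta1 p s * Theta_h p s)"
  by (intro continuous_intros continuous_on_Theta1 continuous_on_Theta_h)

lemma Theta1_mult_Theta_bounded:
  assumes p: "p > 0"
  shows "\<bar>Theta1 p t * Theta_h p t\<bar> \<le> alpha_p p powr (- 1 / p) / p"
  using abs_Theta1_mult_Theta_le[OF p] Theta_h_sq_bounded[OF p] p
  by (smt (verit) divide_right_mono)

definition Theta_moment :: "real \<Rightarrow> real \<Rightarrow> real \<Rightarrow> real" where
  "Theta_moment p k t = integral {..t} (\<lambda>s. exp (k * s) * (Theta1 p s * Theta_h p s))"

lemma Theta_moment_bounded:
  assumes p: "p > 0" and k: "0 < k" "k < 2 / p"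
  obtains K where "\<And>t. \<bar>Theta_moment p k t\<bar> \<le> K"
proof
  define A where "A = alpha_p p powr (- 1 / p)"
  define L where "L = (1 + A^2) / p"
  have bound: "\<bar>exp (k * s) * (Theta1 p s * Theta_h p s)\<bar> \<le> exp (k * s) * ((Theta_h p s)^2 / p)" for s
    using mult_left_mono[OF abs_Theta1_mult_Theta_le[OF p, of s] less_imp_le[OF exp_gt_zero]]
    by (simp add: abs_mult)
  fix t
  show "\<bar>Theta_moment p k t\<bar> \<le> L / k + L / (2 / p - k)"
    unfolding Theta_moment_def
  proof (rule integral_atMost_bound_by_two_sided_exp[OF _ k(1)])
    show "continuous_on UNIV (\<lambda>s. exp (k * s) * (Theta1 p s * Theta_h p s))"
      by (intro continuous_intros continuous_on_Theta1[OF p] continuous_on_Theta_h[OF p])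
    show "0 < 2 / p - k" using k by simp
  next
    fix s :: real assume "s \<le> 0"
    then have "Theta_h p s \<le> 1"
      using Theta_h_le_exp[OF p, of s] p by (smt (verit) divide_nonpos_pos exp_le_one_iff)
    then have "(Theta_h p s)^2 \<le> 1 + A^2"
      using Theta_h_pos[OF p, of s] by (smt (verit) power_le_one zero_le_power2)
    then have "exp (k * s) * ((Theta_h p s)^2 / p) \<le> exp (k * s) * L"
      unfolding L_def using p by (intro mult_left_mono divide_right_mono) auto
    then show "\<bar>exp (k * s) * (Theta1 p s * Theta_h p s)\<bar> \<le> L * exp (k * s)"
      using bound[of s] by (simp add: mult.commute)
  next
    fix s :: real assume "s \<ge> 0"
    have "(Theta_h p s)^2 \<le> (A * exp (- s / p))^2"
      using Theta_h_le_exp_neg[OF p, of s] Theta_h_pos[OF p, of s] unfolding A_def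
      by (intro power_mono) auto
    also have "\<dots> = A^2 * exp (- 2 * s / p)"
      by (simp add: power2_eq_square exp_add[symmetric] field_simps)
    also have "\<dots> \<le> (1 + A^2) * exp (- 2 * s / p)"
      by (intro mult_right_mono) auto
    finally have "exp (k * s) * ((Theta_h p s)^2 / p) \<le> exp (k * s) * (L * exp (- 2 * s / p))"
      unfolding L_def using p by (intro mult_left_mono) (auto simp: divide_right_mono)
    also have "\<dots> = L * exp (- (2 / p - k) * s)"
      by (simp add: exp_add[symmetric] algebra_simps)
    finally show "\<bar>exp (k * s) * (Theta1 p s * Theta_h p s)\<bar> \<le> L * exp (- (2 / p - k) * s)"
      using bound[of s] by linarith
  qed
qed

lemma Theta_moment_window_bound:
  assumes p: "p > 0" and k: "k > 0" and b: "b > 0" and t: "t \<le> T + a * p * ln b"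
  shows "b powr (- k * p) * \<bar>Theta_moment p k t\<bar>
    \<le> alpha_p p powr (- 1 / p) / (p * k) * exp (k * T) * b powr (- k * p * (1 - a))"
proof -
  have "\<bar>Theta_moment p k t\<bar> \<le> alpha_p p powr (- 1 / p) / p * exp (k * t) / k"
    unfolding Theta_moment_def
    using exp_mult_bounded_integral_atMost[OF continuous_on_Theta1_mult_Theta[OF p]
        Theta1_mult_Theta_bounded[OF p] k] by blast
  then have "b powr (- k * p) * \<bar>Theta_moment p k t\<bar>
      \<le> b powr (- k * p) * (alpha_p p powr (- 1 / p) / p * exp (k * t) / k)"
    by (rule mult_left_mono) simp
  also have "\<dots> = alpha_p p powr (- 1 / p) / (p * k) * (b powr (- k * p) * exp (k * t))"
    by (simp add: field_simps)
  also have "\<dots> \<le> alpha_p p powr (- 1 / p) / (p * k) * (exp (k * T) * b powr (- k * p * (1 - a)))"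
    using powr_mult_exp_le_window[OF b t] k p by (intro mult_left_mono) auto
  finally show ?thesis by (simp add: mult_ac)
qed

section \<open>The source term f_b\<close>

lemma integral_f_b_mult:
  fixes g :: "real \<Rightarrow> real"
  assumes g: "continuous_on UNIV g" and M: "\<And>s. \<bar>g s\<bar> \<le> M"
  shows "(\<lambda>s. f_b p lam b s * g s) integrable_on {..t}"
    and "integral {..t} (\<lambda>s. f_b p lam b s * g s)
      = - lam * b powr (-2 * p) * integral {..t} (\<lambda>s. exp (2 * s) * g s)
        + b powr (-4 * p) * integral {..t} (\<lambda>s. exp (4 * s) * g s)"
proof -
  have int: "(\<lambda>s. exp (k * s) * g s) integrable_on {..t}" if "k > 0" for k
    using exp_mult_bounded_integral_atMost[OF g M that] by blast
  have eq: "(\<lambda>s. f_b p lam b s * g s) = (\<lambda>s. (- lam * b powr (-2 * p)) * (exp (2 * s) * g s)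
      + b powr (-4 * p) * (exp (4 * s) * g s))"
    by (auto simp: f_b_def algebra_simps)
  show "(\<lambda>s. f_b p lam b s * g s) integrable_on {..t}"
    unfolding eq by (intro integrable_add integrable_on_mult_right int) auto
  show "integral {..t} (\<lambda>s. f_b p lam b s * g s)
      = - lam * b powr (-2 * p) * integral {..t} (\<lambda>s. exp (2 * s) * g s)
        + b powr (-4 * p) * integral {..t} (\<lambda>s. exp (4 * s) * g s)"
    unfolding eq
    by (subst integral_add[OF integrable_on_mult_right[OF int] integrable_on_mult_right[OF int]]) auto
qed

lemma abs_integral_f_b_mult_le:
  fixes g :: "real \<Rightarrow> real"
  assumes g: "continuous_on UNIV g" and M: "\<And>s. \<bar>g s\<bar> \<le> M"
  shows "\<bar>integral {..t} (\<lambda>s. f_b p lam b s * g s)\<bar>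
    \<le> M * (\<bar>lam\<bar> * b powr (-2 * p) * exp (2 * t) / 2 + b powr (-4 * p) * exp (4 * t) / 4)"
proof -
  have bound: "\<bar>integral {..t} (\<lambda>s. exp (k * s) * g s)\<bar> \<le> M * exp (k * t) / k" if "k > 0" for k
    using exp_mult_bounded_integral_atMost[OF g M that] by blast
  have "\<bar>integral {..t} (\<lambda>s. f_b p lam b s * g s)\<bar>
      \<le> \<bar>lam\<bar> * b powr (-2 * p) * \<bar>integral {..t} (\<lambda>s. exp (2 * s) * g s)\<bar>
        + b powr (-4 * p) * \<bar>integral {..t} (\<lambda>s. exp (4 * s) * g s)\<bar>"
    unfolding integral_f_b_mult(2)[OF g M] by (rule abs_triangle_ineq[THEN order_trans]) (simp add: abs_mult)
  also have "\<dots> \<le> \<bar>lam\<bar> * b powr (-2 * p) * (M * exp (2 * t) / 2)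
        + b powr (-4 * p) * (M * exp (4 * t) / 4)"
    using bound[of 2] bound[of 4] by (intro add_mono mult_left_mono) auto
  finally show ?thesis by (simp add: algebra_simps)
qed

definition int_f_Theta :: "real \<Rightarrow> real \<Rightarrow> real \<Rightarrow> real \<Rightarrow> real" where
  "int_f_Theta p lam b t = integral {..t} (\<lambda>s. f_b p lam b s * (Theta1 p s * Theta_h p s))"

definition int_f_Sg :: "real \<Rightarrow> real \<Rightarrow> real \<Rightarrow> (real \<Rightarrow> real) \<Rightarrow> real \<Rightarrow> real" where
  "int_f_Sg p lam b Sg t = integral {..t} (\<lambda>s. f_b p lam b s * (Sg s * Theta_h p s))"

lemma abs_int_f_Theta_le:
  assumes p: "p > 0" and moment2: "\<bar>Theta_moment p 2 t\<bar> \<le> K"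
    and moment4: "b powr (-4 * p) * \<bar>Theta_moment p 4 t\<bar> \<le> \<kappa> * Y"
    and "\<kappa> \<le> K" and "0 \<le> Y"
  shows "\<bar>int_f_Theta p lam b t\<bar> \<le> K * (\<bar>lam\<bar> * b powr (-2 * p) + Y)"
proof -
  have "\<bar>int_f_Theta p lam b t\<bar>
      \<le> \<bar>lam\<bar> * b powr (-2 * p) * \<bar>Theta_moment p 2 t\<bar> + b powr (-4 * p) * \<bar>Theta_moment p 4 t\<bar>"
    unfolding int_f_Theta_def Theta_moment_def
      integral_f_b_mult(2)[OF continuous_on_Theta1_mult_Theta[OF p] Theta1_mult_Theta_bounded[OF p]]
    by (rule abs_triangle_ineq[THEN order_trans]) (simp add: abs_mult)
  also have "\<dots> \<le> \<bar>lam\<bar> * b powr (-2 * p) * K + K * Y"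
  proof (rule add_mono)
    show "\<bar>lam\<bar> * b powr (-2 * p) * \<bar>Theta_moment p 2 t\<bar> \<le> \<bar>lam\<bar> * b powr (-2 * p) * K"
      using moment2 by (intro mult_left_mono) auto
    show "b powr (-4 * p) * \<bar>Theta_moment p 4 t\<bar> \<le> K * Y"
      using moment4 mult_right_mono[OF \<open>\<kappa> \<le> K\<close> \<open>0 \<le> Y\<close>] by linarith
  qed
  also have "\<dots> = K * (\<bar>lam\<bar> * b powr (-2 * p) + Y)"
    by (simp add: algebra_simps)
  finally show ?thesis .
qed

section \<open>Solutions of the Wronskian identity\<close>

locale Theta_wronskian =
  fixes p :: real and Sg Sg' :: "real \<Rightarrow> real"
  assumes p_pos: "0 < p"
    and Sg_has_real_derivative: "\<And>t. (Sg has_real_derivative Sg' t) (at t)"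
    and wronskian: "\<And>t. Theta1 p t * Sg' t - Theta2 p t * Sg t = 1"
begin

lemma continuous_on_Sg: "continuous_on UNIV Sg"
  using Sg_has_real_derivative by (meson DERIV_isCont continuous_at_imp_continuous_on)

lemma Sg_div_Theta1_has_real_derivative:
  assumes "Theta1 p t \<noteq> 0"
  shows "((\<lambda>s. Sg s / Theta1 p s) has_real_derivative 1 / (Theta1 p t)^2) (at t)"
proof -
  have "((\<lambda>s. Sg s / Theta1 p s) has_real_derivative
      (Sg' t * Theta1 p t - Sg t * Theta2 p t) / (Theta1 p t * Theta1 p t)) (at t)"
    by (rule DERIV_divide[OF Sg_has_real_derivative Theta1_has_real_derivative[OF p_pos] assms])
  then show ?thesis
    using wronskian[of t] by (simp add: power2_eq_square mult.commute)
qed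

lemma Sg_div_Theta1_increment_bounds:
  assumes "a \<le> b"
    and nz: "\<And>s. a \<le> s \<Longrightarrow> s \<le> b \<Longrightarrow> Theta1 p s \<noteq> 0"
    and le: "\<And>s. a \<le> s \<Longrightarrow> s \<le> b \<Longrightarrow> 1 / (Theta1 p s)^2 \<le> h' s"
    and h: "\<And>s. (h has_real_derivative h' s) (at s)"
  shows "0 \<le> Sg b / Theta1 p b - Sg a / Theta1 p a"
    and "Sg b / Theta1 p b - Sg a / Theta1 p a \<le> h b - h a"
proof -
  have u: "((\<lambda>s. Sg s / Theta1 p s) has_real_derivative 1 / (Theta1 p s)^2) (at s)"
    if "a \<le> s" "s \<le> b" for s
    using Sg_div_Theta1_has_real_derivative[OF nz[OF that]] .
  have "(\<lambda>_. 0) b - (\<lambda>_. 0) a \<le> (\<lambda>s. Sg s / Theta1 p s) b - (\<lambda>s. Sg s / Theta1 p s) a"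
    by (rule increment_le_of_deriv_le[OF \<open>a \<le> b\<close> DERIV_const u]) auto
  then show "0 \<le> Sg b / Theta1 p b - Sg a / Theta1 p a" by simp
  show "Sg b / Theta1 p b - Sg a / Theta1 p a \<le> h b - h a"
    by (rule increment_le_of_deriv_le[OF \<open>a \<le> b\<close> u h le])
qed

lemma abs_Sg_div_Theta1_le_right:
  assumes c: "c > 0" and lower: "\<And>s. t0 \<le> s \<Longrightarrow> c * exp (- s / p) \<le> \<bar>Theta1 p s\<bar>"
    and t: "t0 \<le> t"
  shows "\<bar>Sg t / Theta1 p t\<bar> \<le> \<bar>Sg t0 / Theta1 p t0\<bar> + p / (2 * c^2) * exp (2 * t / p)"
proof -
  have nz: "Theta1 p s \<noteq> 0" if "t0 \<le> s" for s
    using lower[OF that] c by (smt (verit) exp_gt_zero mult_pos_pos)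
  have inv_sq: "1 / (Theta1 p s)^2 \<le> exp (2 * s / p) / c^2" if "t0 \<le> s" for s
  proof -
    have "1 / (Theta1 p s)^2 \<le> 1 / (c * exp (- s / p))^2"
      using lower[OF that] c by (intro inverse_square_le_of_le_abs) auto
    also have "\<dots> = exp (2 * s / p) / c^2"
      by (simp add: power_mult_distrib exp_minus power2_eq_square exp_add[symmetric] field_simps)
    finally show ?thesis .
  qed
  have h: "((\<lambda>s. p / (2 * c^2) * exp (2 * s / p)) has_real_derivative exp (2 * s / p) / c^2) (at s)" for s
    using p_pos c by (auto intro!: derivative_eq_intros simp: field_simps power2_eq_square)
  have "0 \<le> p / (2 * c^2) * exp (2 * t0 / p)"
    using p_pos by simp
  then show ?thesis
    using Sg_div_Theta1_increment_bounds[OF t nz inv_sq h] by linarith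
qed

lemma abs_Sg_div_Theta1_le_left:
  assumes c: "c > 0" and lower: "\<And>s. s \<le> t0 \<Longrightarrow> c * exp (s / p) \<le> \<bar>Theta1 p s\<bar>"
    and t: "t \<le> t0"
  shows "\<bar>Sg t / Theta1 p t\<bar> \<le> \<bar>Sg t0 / Theta1 p t0\<bar> + p / (2 * c^2) * exp (- 2 * t / p)"
proof -
  have nz: "Theta1 p s \<noteq> 0" if "s \<le> t0" for s
    using lower[OF that] c by (smt (verit) exp_gt_zero mult_pos_pos)
  have inv_sq: "1 / (Theta1 p s)^2 \<le> exp (- 2 * s / p) / c^2" if "s \<le> t0" for s
  proof -
    have "1 / (Theta1 p s)^2 \<le> 1 / (c * exp (s / p))^2"
      using lower[OF that] c by (intro inverse_square_le_of_le_abs) auto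
    also have "\<dots> = exp (- 2 * s / p) / c^2"
      by (simp add: power_mult_distrib exp_minus power2_eq_square exp_add[symmetric] field_simps)
    finally show ?thesis .
  qed
  have h: "((\<lambda>s. - (p / (2 * c^2) * exp (- 2 * s / p))) has_real_derivative
      exp (- 2 * s / p) / c^2) (at s)" for s
    using p_pos c by (auto intro!: derivative_eq_intros simp: field_simps power2_eq_square)
  have "0 \<le> p / (2 * c^2) * exp (- 2 * t0 / p)"
    using p_pos by simp
  then show ?thesis
    using Sg_div_Theta1_increment_bounds[OF t nz inv_sq h] by linarith
qed

lemma abs_Sg'_le:
  assumes c: "c > 0" and lower: "c * exp (- t / p) \<le> \<bar>Theta1 p t\<bar>"
    and Theta2: "\<bar>Theta2 p t\<bar> \<le> K * exp (- t / p)" and Sg: "\<bar>Sg t\<bar> \<le> L * exp (t / p)"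
  shows "\<bar>Sg' t\<bar> \<le> (1 + K * L) / c * exp (t / p)"
proof -
  have "Theta1 p t \<noteq> 0"
    using lower c by (smt (verit) exp_gt_zero mult_pos_pos)
  then have "Sg' t = (1 + Theta2 p t * Sg t) / Theta1 p t"
    using wronskian[of t] by (simp add: field_simps)
  then have "\<bar>Sg' t\<bar> = \<bar>1 + Theta2 p t * Sg t\<bar> / \<bar>Theta1 p t\<bar>"
    by (simp add: abs_divide)
  also have "\<dots> \<le> (1 + K * L) / (c * exp (- t / p))"
  proof (rule frac_le)
    have "\<bar>Theta2 p t * Sg t\<bar> \<le> K * exp (- t / p) * (L * exp (t / p))"
      unfolding abs_mult using Theta2 Sg by (intro mult_mono) (auto intro: order_trans[OF abs_ge_zero])
    then show "\<bar>1 + Theta2 p t * Sg t\<bar> \<le> 1 + K * L"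
      by (simp add: exp_minus field_simps)
    then show "0 \<le> 1 + K * L" by simp
  qed (use lower c in auto)
  also have "\<dots> = (1 + K * L) / c * exp (t / p)"
    by (simp add: exp_minus field_simps)
  finally show ?thesis .
qed

lemma Sg_growth_right:
  obtains K where "K \<ge> 0"
    and "\<And>t. Theta_right_edge p \<le> t \<Longrightarrow> \<bar>Sg t\<bar> \<le> K * exp (t / p) \<and> \<bar>Sg' t\<bar> \<le> K * exp (t / p)"
proof -
  define t0 where "t0 = Theta_right_edge p"
  obtain c where c: "c > 0" and lower: "\<And>s. t0 \<le> s \<Longrightarrow> c * exp (- s / p) \<le> \<bar>Theta1 p s\<bar>"
    using Theta1_lower_bound_right[OF p_pos] unfolding t0_def by blast
  obtain K where K: "K \<ge> 0"
    and decay: "\<And>s. \<bar>Theta1 p s\<bar> \<le> K * exp (- s / p) \<and> \<bar>Theta2 p s\<bar> \<le> K * exp (- s / p)"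
    using Theta_derivs_decay[OF p_pos] by blast
  define u0 where "u0 = \<bar>Sg t0 / Theta1 p t0\<bar>"
  define L where "L = u0 * K * exp (- 2 * t0 / p) + K * p / (2 * c^2)"
  have L: "L \<ge> 0" unfolding L_def u0_def using K c p_pos by simp
  have Sg: "\<bar>Sg t\<bar> \<le> L * exp (t / p)" if t: "t0 \<le> t" for t
  proof -
    have "Theta1 p t \<noteq> 0"
      using lower[OF t] c by (smt (verit) exp_gt_zero mult_pos_pos)
    then have "\<bar>Sg t\<bar> = \<bar>Sg t / Theta1 p t\<bar> * \<bar>Theta1 p t\<bar>"
      by (simp add: abs_divide)
    also have "\<dots> \<le> (u0 + p / (2 * c^2) * exp (2 * t / p)) * (K * exp (- t / p))"
      using abs_Sg_div_Theta1_le_right[OF c lower t] decay[of t] unfolding u0_def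
      by (intro mult_mono') auto
    also have "\<dots> = u0 * K * exp (- t / p) + K * p / (2 * c^2) * exp (t / p)"
      by (simp add: algebra_simps exp_add[symmetric] diff_divide_distrib)
    also have "\<dots> \<le> u0 * K * (exp (- 2 * t0 / p) * exp (t / p)) + K * p / (2 * c^2) * exp (t / p)"
      using t p_pos K by (simp add: u0_def mult_left_mono exp_add[symmetric] divide_right_mono)
    also have "\<dots> = L * exp (t / p)"
      by (simp add: L_def algebra_simps)
    finally show ?thesis .
  qed
  show thesis
  proof (rule that[of "L + (1 + K * L) / c"])
    show "L + (1 + K * L) / c \<ge> 0" using L K c by simp
    fix t assume "Theta_right_edge p \<le> t"
    then have t: "t0 \<le> t" by (simp add: t0_def)
    have "\<bar>Sg' t\<bar> \<le> (1 + K * L) / c * exp (t / p)"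
      using abs_Sg'_le[OF c lower[OF t] conjunct2[OF decay[of t]] Sg[OF t]] .
    then show "\<bar>Sg t\<bar> \<le> (L + (1 + K * L) / c) * exp (t / p) \<and> \<bar>Sg' t\<bar> \<le> (L + (1 + K * L) / c) * exp (t / p)"
      using Sg[OF t] L K c by (smt (verit) divide_nonneg_pos exp_gt_zero mult_nonneg_nonneg mult_right_mono)
  qed
qed

lemma Sg_Theta_bounded_left:
  obtains M where "\<And>t. t \<le> Theta_left_edge p \<Longrightarrow> \<bar>Sg t * Theta_h p t\<bar> \<le> M"
proof -
  define t0 where "t0 = Theta_left_edge p"
  obtain c where c: "c > 0" and lower: "\<And>s. s \<le> t0 \<Longrightarrow> c * exp (s / p) \<le> \<bar>Theta1 p s\<bar>"
    using Theta1_lower_bound_left[OF p_pos] unfolding t0_def by blast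
  define u0 where "u0 = \<bar>Sg t0 / Theta1 p t0\<bar>"
  show thesis
  proof (rule that)
    fix t assume "t \<le> Theta_left_edge p"
    then have t: "t \<le> t0" by (simp add: t0_def)
    have "Theta1 p t \<noteq> 0"
      using lower[OF t] c by (smt (verit) exp_gt_zero mult_pos_pos)
    then have "\<bar>Sg t * Theta_h p t\<bar> = \<bar>Sg t / Theta1 p t\<bar> * \<bar>Theta1 p t * Theta_h p t\<bar>"
      by (simp add: abs_mult abs_divide)
    also have "\<dots> \<le> (u0 + p / (2 * c^2) * exp (- 2 * t / p)) * (exp (2 * t / p) / p)"
    proof (rule mult_mono')
      show "\<bar>Theta1 p t * Theta_h p t\<bar> \<le> exp (2 * t / p) / p"
        using abs_Theta1_mult_Theta_le[OF p_pos, of t] Theta_h_sq_le_exp[OF p_pos, of t] p_pos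
        by (smt (verit) divide_right_mono)
    qed (use abs_Sg_div_Theta1_le_left[OF c lower t] in \<open>auto simp: u0_def\<close>)
    also have "\<dots> = u0 * exp (2 * t / p) / p + 1 / (2 * c^2)"
      using p_pos by (simp add: field_simps exp_add[symmetric])
    also have "\<dots> \<le> u0 * exp (2 * t0 / p) / p + 1 / (2 * c^2)"
      using t p_pos by (auto simp: u0_def intro!: divide_right_mono mult_left_mono)
    finally show "\<bar>Sg t * Theta_h p t\<bar> \<le> u0 * exp (2 * t0 / p) / p + 1 / (2 * c^2)" .
  qed
qed

lemma Sg_Theta_bounded:
  obtains M where "\<And>t. \<bar>Sg t * Theta_h p t\<bar> \<le> M"
proof -
  define tL tR where "tL = Theta_left_edge p" and "tR = Theta_right_edge p"
  obtain M1 where left: "\<And>t. t \<le> tL \<Longrightarrow> \<bar>Sg t * Theta_h p t\<bar> \<le> M1"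
    using Sg_Theta_bounded_left unfolding tL_def by blast
  obtain K where right: "\<And>t. tR \<le> t \<Longrightarrow> \<bar>Sg t\<bar> \<le> K * exp (t / p) \<and> \<bar>Sg' t\<bar> \<le> K * exp (t / p)"
    using Sg_growth_right unfolding tR_def by blast
  have "compact ((\<lambda>s. Sg s * Theta_h p s) ` {tL..tR})"
    by (intro compact_continuous_image continuous_on_mult continuous_on_subset[OF continuous_on_Sg]
        continuous_on_subset[OF continuous_on_Theta_h[OF p_pos]]) auto
  then obtain M2 where middle: "\<And>t. t \<in> {tL..tR} \<Longrightarrow> \<bar>Sg t * Theta_h p t\<bar> \<le> M2"
    using compact_imp_bounded bounded_real by (metis (no_types, lifting) image_eqI)
  define A where "A = alpha_p p powr (- 1 / p)"
  show thesis
  proof (rule that[of "max M1 (max M2 (K * A))"])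
    fix t
    consider "t \<le> tL" | "t \<in> {tL..tR}" | "tR \<le> t"
      by (meson atLeastAtMost_iff linear)
    then show "\<bar>Sg t * Theta_h p t\<bar> \<le> max M1 (max M2 (K * A))"
    proof cases
      case 1
      show ?thesis by (rule order_trans[OF left[OF 1]]) simp
    next
      case 2
      show ?thesis by (rule order_trans[OF middle[OF 2]]) simp
    next
      case 3
      have "\<bar>Sg t * Theta_h p t\<bar> \<le> (K * exp (t / p)) * (A * exp (- t / p))"
        unfolding abs_mult A_def using right[OF 3] Theta_h_le_exp_neg[OF p_pos, of t] Theta_h_pos[OF p_pos, of t]
        by (intro mult_mono') auto
      also have "\<dots> = K * A"
        by (simp add: exp_minus field_simps)
      finally show ?thesis by (rule order_trans) simp
    qed
  qed
qed

section \<open>Estimates for gamma_h\<close>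

lemma gamma_h_eq:
  "gamma_h p lam b Sg t = Sg t * int_f_Theta p lam b t - Theta1 p t * int_f_Sg p lam b Sg t"
  by (simp add: gamma_h_def int_f_Theta_def int_f_Sg_def deriv_Theta_h[OF p_pos] mult.assoc)

lemma deriv_gamma_h_eq:
  "deriv (gamma_h p lam b Sg) t = Sg' t * int_f_Theta p lam b t - Theta2 p t * int_f_Sg p lam b Sg t"
proof -
  obtain M where M: "\<And>s. \<bar>Sg s * Theta_h p s\<bar> \<le> M"
    using Sg_Theta_bounded by blast
  have cont_Sg_Theta: "continuous_on UNIV (\<lambda>s. Sg s * Theta_h p s)"
    by (intro continuous_intros continuous_on_Sg continuous_on_Theta_h[OF p_pos])
  have cont_f: "continuous_on UNIV (f_b p lam b)"
    unfolding f_b_def[abs_def] by (intro continuous_intros)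
  have dTheta: "(int_f_Theta p lam b has_real_derivative f_b p lam b t * (Theta1 p t * Theta_h p t)) (at t)"
    unfolding int_f_Theta_def[abs_def]
    by (rule integral_atMost_has_real_derivative[OF continuous_on_mult[OF cont_f
          continuous_on_Theta1_mult_Theta[OF p_pos]]
          integral_f_b_mult(1)[OF continuous_on_Theta1_mult_Theta[OF p_pos] Theta1_mult_Theta_bounded[OF p_pos]]])
  have dSg: "(int_f_Sg p lam b Sg has_real_derivative f_b p lam b t * (Sg t * Theta_h p t)) (at t)"
    unfolding int_f_Sg_def[abs_def]
    by (rule integral_atMost_has_real_derivative[OF continuous_on_mult[OF cont_f cont_Sg_Theta]
          integral_f_b_mult(1)[OF cont_Sg_Theta M]])
  have "gamma_h p lam b Sg = (\<lambda>t. Sg t * int_f_Theta p lam b t - Theta1 p t * int_f_Sg p lam b Sg t)"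
    using gamma_h_eq by blast
  then have "(gamma_h p lam b Sg has_real_derivative
      (Sg' t * int_f_Theta p lam b t + f_b p lam b t * (Theta1 p t * Theta_h p t) * Sg t)
      - (Theta2 p t * int_f_Sg p lam b Sg t + f_b p lam b t * (Sg t * Theta_h p t) * Theta1 p t)) (at t)"
    using DERIV_diff[OF DERIV_mult[OF Sg_has_real_derivative dTheta]
        DERIV_mult[OF Theta1_has_real_derivative[OF p_pos] dSg]] by simp
  then show ?thesis
    by (simp add: DERIV_imp_deriv algebra_simps)
qed

lemma gamma_h_right_bound:
  obtains C where "C \<ge> 0"
    and "\<And>lam b t. Theta_right_edge p \<le> t \<Longrightarrow>
      \<bar>gamma_h p lam b Sg t\<bar>
        \<le> C * (\<bar>int_f_Theta p lam b t\<bar> * exp (t / p) + \<bar>int_f_Sg p lam b Sg t\<bar> * exp (- t / p))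
      \<and> \<bar>deriv (gamma_h p lam b Sg) t\<bar>
        \<le> C * (\<bar>int_f_Theta p lam b t\<bar> * exp (t / p) + \<bar>int_f_Sg p lam b Sg t\<bar> * exp (- t / p))"
proof -
  obtain KS where KS: "KS \<ge> 0"
    and Sg: "\<And>t. Theta_right_edge p \<le> t \<Longrightarrow> \<bar>Sg t\<bar> \<le> KS * exp (t / p) \<and> \<bar>Sg' t\<bar> \<le> KS * exp (t / p)"
    using Sg_growth_right by blast
  obtain K where K: "K \<ge> 0"
    and Theta: "\<And>t. \<bar>Theta1 p t\<bar> \<le> K * exp (- t / p) \<and> \<bar>Theta2 p t\<bar> \<le> K * exp (- t / p)"
    using Theta_derivs_decay[OF p_pos] by blast
  show thesis
  proof (rule that[of "KS + K"])
    show "KS + K \<ge> 0" using KS K by simp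
    fix lam b t assume t: "Theta_right_edge p \<le> t"
    define I1 I2 where "I1 = \<bar>int_f_Theta p lam b t\<bar>" and "I2 = \<bar>int_f_Sg p lam b Sg t\<bar>"
    have "KS * exp (t / p) * I1 + K * exp (- t / p) * I2 \<le> (KS + K) * (I1 * exp (t / p) + I2 * exp (- t / p))"
      using KS K by (simp add: I1_def I2_def algebra_simps)
    moreover have "\<bar>gamma_h p lam b Sg t\<bar> \<le> KS * exp (t / p) * I1 + K * exp (- t / p) * I2"
      unfolding gamma_h_eq I1_def I2_def using Sg[OF t] Theta[of t] by (intro abs_mult_diff_mult_le) auto
    moreover have "\<bar>deriv (gamma_h p lam b Sg) t\<bar> \<le> KS * exp (t / p) * I1 + K * exp (- t / p) * I2"
      unfolding deriv_gamma_h_eq I1_def I2_def using Sg[OF t] Theta[of t] by (intro abs_mult_diff_mult_le) auto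
    ultimately show "\<bar>gamma_h p lam b Sg t\<bar> \<le> (KS + K) * (I1 * exp (t / p) + I2 * exp (- t / p))
      \<and> \<bar>deriv (gamma_h p lam b Sg) t\<bar> \<le> (KS + K) * (I1 * exp (t / p) + I2 * exp (- t / p))"
      by linarith
  qed
qed

lemma int_f_Sg_window_bound:
  assumes M: "\<And>s. \<bar>Sg s * Theta_h p s\<bar> \<le> M" and b: "b > 0" and t: "t \<le> T + a * p * ln b"
  shows "\<bar>int_f_Sg p lam b Sg t\<bar>
    \<le> M * (exp (2 * T) + exp (4 * T)) * (\<bar>lam\<bar> * b powr (-2 * p * (1 - a)) + b powr (-4 * p * (1 - a)))"
proof -
  have M0: "M \<ge> 0" using M[of 0] by simp
  have cont: "continuous_on UNIV (\<lambda>s. Sg s * Theta_h p s)"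
    by (intro continuous_intros continuous_on_Sg continuous_on_Theta_h[OF p_pos])
  have "\<bar>int_f_Sg p lam b Sg t\<bar>
      \<le> M * (\<bar>lam\<bar> * (b powr (-2 * p) * exp (2 * t)) / 2 + b powr (-4 * p) * exp (4 * t) / 4)"
    unfolding int_f_Sg_def using abs_integral_f_b_mult_le[OF cont M] by (simp add: mult.assoc)
  also have "\<dots> \<le> M * (\<bar>lam\<bar> * (exp (2 * T) * b powr (-2 * p * (1 - a))) / 2
      + exp (4 * T) * b powr (-4 * p * (1 - a)) / 4)"
    using powr_mult_exp_le_window[OF b t, of 2] powr_mult_exp_le_window[OF b t, of 4] M0
    by (intro mult_left_mono add_mono divide_right_mono mult_left_mono) auto
  also have "\<dots> \<le> M * ((exp (2 * T) + exp (4 * T)) * (\<bar>lam\<bar> * b powr (-2 * p * (1 - a)))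
      + (exp (2 * T) + exp (4 * T)) * b powr (-4 * p * (1 - a)))"
  proof -
    have "exp (2 * T) / 2 \<le> exp (2 * T) + exp (4 * T)" "exp (4 * T) / 4 \<le> exp (2 * T) + exp (4 * T)"
      using exp_gt_zero[of "2 * T"] exp_gt_zero[of "4 * T"] by linarith+
    from mult_right_mono[OF this(1), of "\<bar>lam\<bar> * b powr (-2 * p * (1 - a))"]
      mult_right_mono[OF this(2), of "b powr (-4 * p * (1 - a))"]
    show ?thesis
      using M0 by (intro mult_left_mono) (auto simp: mult_ac)
  qed
  also have "\<dots> = M * (exp (2 * T) + exp (4 * T)) * (\<bar>lam\<bar> * b powr (-2 * p * (1 - a)) + b powr (-4 * p * (1 - a)))"
    by (simp add: algebra_simps)
  finally show ?thesis .
qed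

lemma int_f_window_bounds:
  assumes p1: "p < 1" and Y: "\<And>b. Y b \<ge> 0"
    and moment4: "\<And>b t. b > 0 \<Longrightarrow> t \<le> T + a * p * ln b \<Longrightarrow>
      b powr (-4 * p) * \<bar>Theta_moment p 4 t\<bar> \<le> \<kappa> * Y b"
  obtains D where "D \<ge> 0"
    and "\<And>lam b t. b > 0 \<Longrightarrow> t \<le> T + a * p * ln b \<Longrightarrow>
      \<bar>int_f_Theta p lam b t\<bar> \<le> D * (\<bar>lam\<bar> * b powr (-2 * p) + Y b)
      \<and> \<bar>int_f_Sg p lam b Sg t\<bar> \<le> D * (\<bar>lam\<bar> * b powr (-2 * p * (1 - a)) + b powr (-4 * p * (1 - a)))"
proof -
  obtain M where M: "\<And>s. \<bar>Sg s * Theta_h p s\<bar> \<le> M"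
    using Sg_Theta_bounded by blast
  have "2 < 2 / p" using p1 p_pos by (simp add: field_simps)
  then obtain K2 where K2: "\<And>t. \<bar>Theta_moment p 2 t\<bar> \<le> K2"
    using Theta_moment_bounded[OF p_pos, of 2] by auto
  define D where "D = K2 + \<bar>\<kappa>\<bar> + M * (exp (2 * T) + exp (4 * T))"
  have "0 \<le> M" using M[of 0] by simp
  then have "0 \<le> M * (exp (2 * T) + exp (4 * T))" by simp
  then have D: "\<bar>Theta_moment p 2 t\<bar> \<le> D" "\<kappa> \<le> D" "M * (exp (2 * T) + exp (4 * T)) \<le> D" "0 \<le> D" for t
    using K2[of t] K2[of 0] abs_ge_self[of \<kappa>] unfolding D_def by linarith+
  show thesis
  proof (rule that[OF D(4)])
    fix lam b t assume b: "b > 0" and t: "t \<le> T + a * p * ln b"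
    have "\<bar>int_f_Sg p lam b Sg t\<bar>
        \<le> M * (exp (2 * T) + exp (4 * T)) * (\<bar>lam\<bar> * b powr (-2 * p * (1 - a)) + b powr (-4 * p * (1 - a)))"
      by (rule int_f_Sg_window_bound[OF M b t])
    also have "\<dots> \<le> D * (\<bar>lam\<bar> * b powr (-2 * p * (1 - a)) + b powr (-4 * p * (1 - a)))"
      using D(3) by (intro mult_right_mono) auto
    finally show "\<bar>int_f_Theta p lam b t\<bar> \<le> D * (\<bar>lam\<bar> * b powr (-2 * p) + Y b)
      \<and> \<bar>int_f_Sg p lam b Sg t\<bar> \<le> D * (\<bar>lam\<bar> * b powr (-2 * p * (1 - a)) + b powr (-4 * p * (1 - a)))"
      using abs_int_f_Theta_le[OF p_pos D(1) moment4[OF b t] D(2) Y] by blast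
  qed
qed

text \<open>The parameter Y b stands for the size of the fourth-moment contribution: b^(-4p) when
  that moment is bounded (p < 1/2), b^(-4p(1-a)) otherwise.\<close>

lemma gamma_h_window_bound:
  assumes p1: "p < 1" and a: "a > 0" and Y: "\<And>b. Y b \<ge> 0"
    and moment4: "\<And>b t. b > 0 \<Longrightarrow> t \<le> T + a * p * ln b \<Longrightarrow>
      b powr (-4 * p) * \<bar>Theta_moment p 4 t\<bar> \<le> \<kappa> * Y b"
  shows "\<exists>b0 > 0. \<exists>C > 0. \<forall>b \<ge> b0. \<forall>t \<in> {a * p * ln b .. T + a * p * ln b}.
    \<bar>gamma_h p lam b Sg t\<bar> \<le> C * ((\<bar>lam\<bar> * b powr (-2 * p * (1 - a)) + b powr (-4 * p * (1 - a))) * exp (- t / p)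
      + (\<bar>lam\<bar> * b powr (-2 * p) + Y b) * exp (t / p))
    \<and> \<bar>deriv (gamma_h p lam b Sg) t\<bar> \<le> C * ((\<bar>lam\<bar> * b powr (-2 * p * (1 - a)) + b powr (-4 * p * (1 - a))) * exp (- t / p)
      + (\<bar>lam\<bar> * b powr (-2 * p) + Y b) * exp (t / p))"
proof -
  obtain C0 where C0: "C0 \<ge> 0"
    and right: "\<And>lam b t. Theta_right_edge p \<le> t \<Longrightarrow>
      \<bar>gamma_h p lam b Sg t\<bar>
        \<le> C0 * (\<bar>int_f_Theta p lam b t\<bar> * exp (t / p) + \<bar>int_f_Sg p lam b Sg t\<bar> * exp (- t / p))
      \<and> \<bar>deriv (gamma_h p lam b Sg) t\<bar>
        \<le> C0 * (\<bar>int_f_Theta p lam b t\<bar> * exp (t / p) + \<bar>int_f_Sg p lam b Sg t\<bar> * exp (- t / p))"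
    using gamma_h_right_bound by blast
  obtain D where D: "D \<ge> 0"
    and window: "\<And>lam b t. b > 0 \<Longrightarrow> t \<le> T + a * p * ln b \<Longrightarrow>
      \<bar>int_f_Theta p lam b t\<bar> \<le> D * (\<bar>lam\<bar> * b powr (-2 * p) + Y b)
      \<and> \<bar>int_f_Sg p lam b Sg t\<bar> \<le> D * (\<bar>lam\<bar> * b powr (-2 * p * (1 - a)) + b powr (-4 * p * (1 - a)))"
    using int_f_window_bounds[OF p1 Y moment4] by blast
  define b0 where "b0 = exp (Theta_right_edge p / (a * p))"
  show ?thesis
  proof (rule exI[of _ b0], intro conjI exI[of _ "C0 * D + 1"] allI impI ballI)
    show "b0 > 0" by (simp add: b0_def)
    show "C0 * D + 1 > 0" using mult_nonneg_nonneg[OF C0 D] by linarith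
    fix b t assume b: "b0 \<le> b" and t: "t \<in> {a * p * ln b .. T + a * p * ln b}"
    have bpos: "b > 0" using b unfolding b0_def by (meson exp_gt_zero less_le_trans)
    have "Theta_right_edge p / (a * p) \<le> ln b"
      using b bpos unfolding b0_def by (simp add: ln_ge_iff)
    then have tR: "Theta_right_edge p \<le> t"
      using t a p_pos by (simp add: pos_divide_le_eq mult.commute)
    define Em Ep where "Em = \<bar>lam\<bar> * b powr (-2 * p * (1 - a)) + b powr (-4 * p * (1 - a))"
      and "Ep = \<bar>lam\<bar> * b powr (-2 * p) + Y b"
    have E: "0 \<le> Em * exp (- t / p) + Ep * exp (t / p)" using Y[of b] by (simp add: Em_def Ep_def)
    have "\<bar>int_f_Theta p lam b t\<bar> * exp (t / p) + \<bar>int_f_Sg p lam b Sg t\<bar> * exp (- t / p)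
        \<le> D * Ep * exp (t / p) + D * Em * exp (- t / p)"
      using window[OF bpos, of t lam] t unfolding Em_def Ep_def
      by (intro add_mono mult_right_mono) auto
    also have "\<dots> = D * (Em * exp (- t / p) + Ep * exp (t / p))"
      by (simp add: algebra_simps)
    finally have "C0 * (\<bar>int_f_Theta p lam b t\<bar> * exp (t / p) + \<bar>int_f_Sg p lam b Sg t\<bar> * exp (- t / p))
        \<le> C0 * (D * (Em * exp (- t / p) + Ep * exp (t / p)))"
      by (rule mult_left_mono[OF _ C0])
    also have "\<dots> \<le> (C0 * D + 1) * (Em * exp (- t / p) + Ep * exp (t / p))"
      using E by (simp add: algebra_simps)
    finally show "\<bar>gamma_h p lam b Sg t\<bar> \<le> (C0 * D + 1) * (Em * exp (- t / p) + Ep * exp (t / p))"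
      and "\<bar>deriv (gamma_h p lam b Sg) t\<bar> \<le> (C0 * D + 1) * (Em * exp (- t / p) + Ep * exp (t / p))"
      using right[OF tR, of lam b] by linarith+
  qed
qed

end

theorem mainTheorem4:
  fixes p lam :: real and Sg Sg' Sg'' :: "real \<Rightarrow> real"
  assumes hp: "0 < p" "p < 1"
    and hS1: "\<And>t. (Sg has_real_derivative Sg' t) (at t)"
    and hS2: "\<And>t. (Sg' has_real_derivative Sg'' t) (at t)"
    and hODE: "\<And>t. Sg'' t - (1 / p^2) * Sg t
                 + (2 * p + 1) * (Theta_h p t) powr (2 * p) * Sg t = 0"
    and hW: "\<And>t. deriv (Theta_h p) t * Sg' t - deriv (deriv (Theta_h p)) t * Sg t = 1"
  shows "\<forall>T > 0. \<forall>a. 0 < a \<and> a < p / (1 + p) \<longrightarrow>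
    (\<exists>b0 > 0. \<exists>C > 0. \<forall>b \<ge> b0. \<forall>t \<in> {a * p * ln b .. T + a * p * ln b}.
      (p < 1/2 \<longrightarrow>
         (let B = C * ((\<bar>lam\<bar> * b powr (-2 * p * (1 - a)) + b powr (-4 * p * (1 - a))) * exp (- t / p)
                      + (\<bar>lam\<bar> * b powr (-2 * p) + b powr (-4 * p)) * exp (t / p))
          in \<bar>gamma_h p lam b Sg t\<bar> \<le> B \<and> \<bar>deriv (gamma_h p lam b Sg) t\<bar> \<le> B))
    \<and> (1/2 \<le> p \<longrightarrow>
         (let B = C * ((\<bar>lam\<bar> * b powr (-2 * p * (1 - a)) + b powr (-4 * p * (1 - a))) * exp (- t / p)
                      + (\<bar>lam\<bar> * b powr (-2 * p) + b powr (-4 * p * (1 - a))) * exp (t / p))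
          in \<bar>gamma_h p lam b Sg t\<bar> \<le> B \<and> \<bar>deriv (gamma_h p lam b Sg) t\<bar> \<le> B)))"
proof (intro allI impI, goal_cases)
  case (1 T a)
  interpret Theta_wronskian p Sg Sg'
    using hp hS1 hW by unfold_locales (simp_all add: deriv_Theta_h deriv_Theta1)
  show ?case
  proof (cases "p < 1/2")
    case True
    then have "4 < 2 / p" using hp by (simp add: field_simps)
    then obtain K4 where "\<And>t. \<bar>Theta_moment p 4 t\<bar> \<le> K4"
      using Theta_moment_bounded[OF hp(1), of 4] by auto
    then have "b powr (-4 * p) * \<bar>Theta_moment p 4 t\<bar> \<le> K4 * b powr (-4 * p)" for b t
      by (metis mult.commute mult_right_mono powr_ge_zero)
    from gamma_h_window_bound[OF hp(2) conjunct1[OF 1(2)], of "\<lambda>b. b powr (-4 * p)", OF _ this]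
    show ?thesis using True by (simp add: Let_def)
  next
    case False
    have "b powr (-4 * p) * \<bar>Theta_moment p 4 t\<bar>
        \<le> alpha_p p powr (- 1 / p) / (p * 4) * exp (4 * T) * b powr (-4 * p * (1 - a))"
      if "b > 0" "t \<le> T + a * p * ln b" for b t
      using Theta_moment_window_bound[OF hp(1) _ that, of 4] by simp
    from gamma_h_window_bound[OF hp(2) conjunct1[OF 1(2)], of "\<lambda>b. b powr (-4 * p * (1 - a))", OF _ this]
    show ?thesis using False by (simp add: Let_def)
  qed
qed

end
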